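(* Let $n\ge1$, $1\le m\le n+1$, let $a_1,\dots,a_m\in\mathbb{R}^n$ be affinely independent points, and let $p_1,\dots,p_m\in(0,\infty)$. Consider the $m$-objective problem on $X=\mathbb{R}^n$ with objectives $f_i(x)=\|x-a_i\|^{p_i}$ ($i=1,\dots,m$), where $\|\cdot\|$ is the Euclidean norm. Then this problem is simple. In particular, the MED problem, which is the case $m\le n$ and $a_i=e_i$ (the $i$-th standard basis vector of $\mathbb{R}^n$), is simple for all choices of $n$, $m$ and $p_i$.
   Context: A problem is a finite set $\mathbf{f}=\{f_1,\dots,f_m\}$ of functions $f_i:\mathbb{R}^n\to\mathbb{R}$ together with a feasible region $X\subseteq\mathbb{R}^n$, to be minimized simultaneously. A subproblem $\mathbf{g}\subseteq\mathbf{f}$ is a subset of these functions (including $\emptyset$ and $\mathbf{f}$), with the same $X$; its evaluation map is $x\mapsto(f_i(x))_{f_i\in\mathbf{g}}\in\mathbb{R}^{|\mathbf{g}|}$. The Pareto set $X^*(\mathbf{g})$ is the set of $x^*\in X$ for which there is no $x\in X$ with $f_i(x)\le f_i(x^* )$ for all $f_i\in\mathbf{g}$ and $f_j(x)<f_j(x^* )$ for some $f_j\in\mathbf{g}$; by convention $X^*(\emptyset)=\emptyset$. A problem $\mathbf{f}$ is simple if every subproblem $\mathbf{g}\subseteq\mathbf{f}$ with $k=|\mathbf{g}|$ objectives satisfies: (S1) $X^*(\mathbf{g})$ is homeomorphic to $\Delta^{k-1}=\{t\in[0,1]^k:\sum t_i=1\}$ (with $\Delta^{-1}=\emptyset$);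 (S2) the evaluation map of $\mathbf{g}$ restricted to $X^*(\mathbf{g})$ is a topological embedding into $\mathbb{R}^k$. All sets carry the subspace topology from Euclidean space. *)

theory Defs
  imports "HOL-Analysis.Analysis"
begin

text \<open>A multi-objective problem is given by an indexed family of objectives
  f i, i \<in> I (I finite), and a feasible region X.  A subproblem is given by a
  subset G of the index set.\<close>

definition pareto_set :: "('i \<Rightarrow> 'a \<Rightarrow> real) \<Rightarrow> 'a set \<Rightarrow> 'i set \<Rightarrow> 'a set" where
  "pareto_set f X G =
     (if G = {} then {}
      else {x \<in> X. \<not> (\<exists>y\<in>X. (\<forall>i\<in>G. f i y \<le> f i x) \<and> (\<exists>j\<in>G. f j y < f j x))})"

text \<open>Standard simplex Delta^(k-1) in R^k, points indexed by {..<k}; empty for k = 0.\<close>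
definition std_simplex :: "nat \<Rightarrow> (nat \<Rightarrow> real) set" where
  "std_simplex k = {t \<in> PiE {..<k} (\<lambda>_. {0..1}). (\<Sum>i<k. t i) = 1}"

definition simple_problem ::
  "('i \<Rightarrow> 'a::topological_space \<Rightarrow> real) \<Rightarrow> 'i set \<Rightarrow> 'a set \<Rightarrow> bool" where
  "simple_problem f I X \<longleftrightarrow>
     (\<forall>G. G \<subseteq> I \<longrightarrow>
        (subtopology euclidean (pareto_set f X G)) homeomorphic_space
          (subtopology (powertop_real {..<card G}) (std_simplex (card G)))
      \<and> embedding_map (subtopology euclidean (pareto_set f X G)) (powertop_real G)
          (\<lambda>x. restrict (\<lambda>i. f i x) G))"

end

theory Submission
  imports Defs
begin

text \<open>Since each objective is a strictly increasing function of the distance to a_i,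
  the Pareto set of a subproblem G is that of the distances alone, and this is the convex hull
  of the a_i, i \<in> G: a point outside the hull is beaten in every objective by its projection onto
  the hull, while a point y at least as close as a hull point x to every a_i lies in a half-space
  containing the a_i but, unless y = x, not x. The same half-space argument makes the evaluation map
  injective on the hull, hence an embedding by compactness, and affine independence makes the
  barycentric map from the standard simplex onto the hull a homeomorphism.\<close>

lemma pareto_set_cong_le:
  assumes "\<And>i x y. i \<in> G \<Longrightarrow> x \<in> X \<Longrightarrow> y \<in> X \<Longrightarrow> f i x \<le> f i y \<longleftrightarrow> g i x \<le> g i y"
  shows "pareto_set f X G = pareto_set g X G"
proof -
  have "f i x < f i y \<longleftrightarrow> g i x < g i y" if "i \<in> G" "x \<in> X" "y \<in> X" for i x y
    using assms[OF that(1,3,2)] by (simp add: not_le[symmetric])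
  then show ?thesis
    unfolding pareto_set_def using assms by (auto 4 4)
qed

lemma convex_dist_le:
  fixes x y :: "'a::real_inner"
  shows "convex {z. dist y z \<le> dist x z}"
proof -
  have "{z. dist y z \<le> dist x z} = {z. inner (2 *\<^sub>R (x - y)) z \<le> inner x x - inner y y}"
    by (simp add: dist_norm norm_le inner_diff_left inner_diff_right inner_commute algebra_simps)
  then show ?thesis
    by (simp only: convex_halfspace_le)
qed

lemma eq_if_dist_le_on_convex_hull:
  fixes x y :: "'a::real_inner"
  assumes "x \<in> convex hull S" "\<forall>a\<in>S. dist y a \<le> dist x a"
  shows "y = x"
proof -
  have "convex hull S \<subseteq> {z. dist y z \<le> dist x z}"
    using assms(2) by (intro hull_minimal convex_dist_le) auto
  then have "dist y x \<le> dist x x" using assms(1) by blast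
  then show ?thesis by simp
qed

lemma dist_closest_point_less:
  fixes S :: "'a::euclidean_space set"
  assumes "convex S" "closed S" "x \<notin> S" "z \<in> S"
  shows "dist (closest_point S x) z < dist x z"
proof -
  let ?y = "closest_point S x"
  have y: "?y \<in> S" "\<forall>w\<in>S. dist x ?y \<le> dist x w"
    using closest_point_exists[OF assms(2)] assms(4) by auto
  have "inner (x - ?y) (z - ?y) \<le> 0"
    using any_closest_point_dot[OF assms(1,2) y(1) assms(4) y(2)] .
  moreover have "norm (x - ?y) > 0" using y(1) assms(3) by auto
  moreover have "norm (x - z)^2 = norm (x - ?y)^2 - 2 * inner (x - ?y) (z - ?y) + norm (?y - z)^2"
    by (simp add: power2_norm_eq_inner inner_diff_left inner_diff_right inner_commute algebra_simps)
  ultimately have "norm (?y - z)^2 < norm (x - z)^2"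
    by (smt (verit) zero_less_power)
  then show ?thesis
    by (simp add: dist_norm power_less_imp_less_base)
qed

lemma pareto_set_dist:
  fixes a :: "'i \<Rightarrow> 'a::euclidean_space"
  assumes "finite G"
  shows "pareto_set (\<lambda>i x. dist x (a i)) UNIV G = convex hull (a ` G)"
proof (cases "G = {}")
  case True then show ?thesis by (simp add: pareto_set_def)
next
  case False
  let ?S = "convex hull (a ` G)"
  have S: "convex ?S" "closed ?S"
    using assms by (simp_all add: compact_imp_closed finite_imp_compact_convex_hull)
  show ?thesis
  proof (intro equalityI subsetI)
    fix x assume "x \<in> pareto_set (\<lambda>i x. dist x (a i)) UNIV G"
    then have no_better: "\<not> (\<exists>y. (\<forall>i\<in>G. dist y (a i) \<le> dist x (a i)) \<and> (\<exists>j\<in>G. dist y (a j) < dist x (a j)))"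
      using False by (simp add: pareto_set_def)
    show "x \<in> ?S"
    proof (rule ccontr)
      assume "x \<notin> ?S"
      then have "\<forall>i\<in>G. dist (closest_point ?S x) (a i) < dist x (a i)"
        using dist_closest_point_less[OF S] by (simp add: hull_inc)
      then show False using no_better False by (meson less_imp_le ex_in_conv)
    qed
  next
    fix x assume "x \<in> ?S"
    then have "y = x" if "\<forall>i\<in>G. dist y (a i) \<le> dist x (a i)" for y
      using eq_if_dist_le_on_convex_hull[of x "a ` G" y] that by auto
    then show "x \<in> pareto_set (\<lambda>i x. dist x (a i)) UNIV G"
      using False by (auto simp: pareto_set_def)
  qed
qed

lemma powr_le_powr_iff:
  fixes x y p :: real
  assumes "0 < p" "0 \<le> x" "0 \<le> y"
  shows "x powr p \<le> y powr p \<longleftrightarrow> x \<le> y"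
  using powr_mono2[of p x y] powr_less_mono2[of p y x] assms by (auto simp: not_le[symmetric])

lemma pareto_set_powr_dist:
  fixes a :: "'i \<Rightarrow> 'a::euclidean_space"
  assumes "finite G" "\<forall>i\<in>G. 0 < p i"
  shows "pareto_set (\<lambda>i x. norm (x - a i) powr p i) UNIV G = convex hull (a ` G)"
proof -
  have "pareto_set (\<lambda>i x. norm (x - a i) powr p i) UNIV G = pareto_set (\<lambda>i x. dist x (a i)) UNIV G"
    using assms(2) by (intro pareto_set_cong_le) (simp add: powr_le_powr_iff dist_norm)
  then show ?thesis using pareto_set_dist[OF assms(1)] by simp
qed

lemma std_simplex_subset_topspace: "std_simplex k \<subseteq> topspace (powertop_real {..<k})"
  by (auto simp: std_simplex_def)

lemma compactin_std_simplex: "compactin (powertop_real {..<k}) (std_simplex k)"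
proof (rule closed_compactin)
  let ?P = "PiE {..<k} (\<lambda>_. {0..1::real})"
  show "compactin (powertop_real {..<k}) ?P"
    by (simp add: compactin_PiE compactin_euclidean_iff)
  show "std_simplex k \<subseteq> ?P" by (auto simp: std_simplex_def)
  have "closedin (powertop_real {..<k}) {t \<in> topspace (powertop_real {..<k}). (\<Sum>i<k. t i) \<in> {1}}"
    by (rule closedin_continuous_map_preimage)
      (auto intro!: continuous_map_sum continuous_map_product_projection)
  moreover have "std_simplex k = ?P \<inter> {t \<in> topspace (powertop_real {..<k}). (\<Sum>i<k. t i) \<in> {1}}"
    by (auto simp: std_simplex_def)
  ultimately show "closedin (powertop_real {..<k}) (std_simplex k)"
    by (simp add: closedin_Int closedin_product_topology)
qed

lemma affine_independent_imp_coeffs_eq_0: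
  assumes "finite K" "inj_on b K" "\<not> affine_dependent (b ` K)"
    and "sum u K = 0" "(\<Sum>i\<in>K. u i *\<^sub>R b i) = 0" "i \<in> K"
  shows "u i = 0"
proof -
  define v where "v = u \<circ> the_inv_into K b"
  have v_b: "v (b j) = u j" if "j \<in> K" for j
    using assms(2) that by (simp add: v_def the_inv_into_f_f)
  have "sum v (b ` K) = 0" "(\<Sum>x\<in>b ` K. v x *\<^sub>R x) = 0"
    using assms(2,4,5) by (simp_all add: sum.reindex v_b)
  then have "v (b i) = 0"
    using assms(1,3,6) unfolding affine_dependent_explicit_finite[OF finite_imageI[OF assms(1)]]
    by blast
  then show ?thesis using v_b assms(6) by simp
qed

definition barycentric :: "(nat \<Rightarrow> 'a::real_vector) \<Rightarrow> nat \<Rightarrow> (nat \<Rightarrow> real) \<Rightarrow> 'a" where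
  "barycentric b k t = (\<Sum>i<k. t i *\<^sub>R b i)"

lemma continuous_map_barycentric:
  fixes b :: "nat \<Rightarrow> 'a::real_normed_vector"
  shows "continuous_map (powertop_real {..<k}) euclidean (barycentric b k)"
  unfolding barycentric_def
proof (rule continuous_map_sum)
  fix i assume "i \<in> {..<k}"
  then have "continuous_map (powertop_real {..<k}) euclidean ((\<lambda>r. r *\<^sub>R b i) \<circ> (\<lambda>t. t i))"
    by (intro continuous_map_compose[OF continuous_map_product_projection])
      (auto intro: continuous_intros)
  then show "continuous_map (powertop_real {..<k}) euclidean (\<lambda>t. t i *\<^sub>R b i)"
    by (simp add: o_def)
qed simp

lemma barycentric_image_std_simplex:
  assumes "inj_on b {..<k}"
  shows "barycentric b k ` std_simplex k = convex hull (b ` {..<k})"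
proof (intro equalityI subsetI)
  fix y assume "y \<in> barycentric b k ` std_simplex k"
  then obtain t where "t \<in> std_simplex k" "y = (\<Sum>i<k. t i *\<^sub>R b i)"
    by (auto simp: barycentric_def)
  then show "y \<in> convex hull (b ` {..<k})"
    by (auto simp: std_simplex_def PiE_iff hull_inc intro!: convex_sum)
next
  fix y assume "y \<in> convex hull (b ` {..<k})"
  then obtain u where u: "\<forall>x\<in>b ` {..<k}. 0 \<le> u x" "sum u (b ` {..<k}) = 1"
      "(\<Sum>x\<in>b ` {..<k}. u x *\<^sub>R x) = y"
    by (auto simp: convex_hull_finite)
  define t where "t = restrict (u \<circ> b) {..<k}"
  have "u (b i) \<le> 1" if "i < k" for i
    using u(1,2) that member_le_sum[of "b i" "b ` {..<k}" u] by auto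
  then have "t \<in> std_simplex k"
    using assms u(1,2) by (auto simp: std_simplex_def t_def sum.reindex)
  moreover have "barycentric b k t = y"
    using assms u(3) by (simp add: barycentric_def t_def sum.reindex)
  ultimately show "y \<in> barycentric b k ` std_simplex k" by blast
qed

lemma inj_on_barycentric:
  assumes "inj_on b {..<k}" "\<not> affine_dependent (b ` {..<k})"
  shows "inj_on (barycentric b k) (std_simplex k)"
proof (rule inj_onI)
  fix t s assume t: "t \<in> std_simplex k" and s: "s \<in> std_simplex k"
    and eq: "barycentric b k t = barycentric b k s"
  have "sum (\<lambda>i. t i - s i) {..<k} = 0" "(\<Sum>i<k. (t i - s i) *\<^sub>R b i) = 0"
    using t s eq by (simp_all add: std_simplex_def barycentric_def sum_subtractf scaleR_diff_left)
  then have "t i = s i" if "i < k" for i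
    using affine_independent_imp_coeffs_eq_0[OF _ assms, of "\<lambda>i. t i - s i" i] that by simp
  then show "t = s"
    using t s by (auto simp: std_simplex_def intro: PiE_ext)
qed

lemma convex_hull_homeomorphic_std_simplex:
  fixes A :: "'a::euclidean_space set"
  assumes "finite A" "\<not> affine_dependent A"
  shows "subtopology euclidean (convex hull A) homeomorphic_space
           subtopology (powertop_real {..<card A}) (std_simplex (card A))"
proof -
  let ?k = "card A"
  obtain b where b: "bij_betw b {..<?k} A"
    using ex_bij_betw_nat_finite[OF assms(1)] by (auto simp: atLeast0LessThan)
  then have inj: "inj_on b {..<?k}" and A: "A = b ` {..<?k}"
    by (auto simp: bij_betw_def)
  let ?X = "subtopology (powertop_real {..<?k}) (std_simplex ?k)"
  have top: "topspace ?X = std_simplex ?k"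
    using std_simplex_subset_topspace by (simp add: Int_absorb1)
  have img: "barycentric b ?k ` std_simplex ?k = convex hull A"
    using barycentric_image_std_simplex[OF inj] A by simp
  have "homeomorphic_map ?X (subtopology euclidean (convex hull A)) (barycentric b ?k)"
  proof (rule continuous_imp_homeomorphic_map)
    show "continuous_map ?X (subtopology euclidean (convex hull A)) (barycentric b ?k)"
      using img top
      by (intro continuous_map_into_subtopology continuous_map_from_subtopology
          continuous_map_barycentric) auto
    show "compact_space ?X"
      by (rule compact_space_subtopology[OF compactin_std_simplex])
    show "inj_on (barycentric b ?k) (topspace ?X)"
      using inj_on_barycentric[OF inj] assms(2) A top by simp
  qed (use img top in \<open>auto simp: Hausdorff_space_subtopology\<close>)
  then show ?thesis
    by (meson homeomorphic_map_imp_homeomorphic_space homeomorphic_space_sym)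
qed

lemma embedding_map_powr_dist:
  fixes a :: "'i \<Rightarrow> 'a::euclidean_space"
  assumes "finite G" "\<forall>i\<in>G. 0 < p i"
  shows "embedding_map (subtopology euclidean (convex hull (a ` G))) (powertop_real G)
           (\<lambda>x. restrict (\<lambda>i. norm (x - a i) powr p i) G)"
proof (rule continuous_imp_embedding_map)
  have "continuous_on (convex hull (a ` G)) (\<lambda>x. norm (x - a i) powr p i)" if "i \<in> G" for i
    using assms(2) that by (intro continuous_on_powr' continuous_intros) auto
  then show "continuous_map (subtopology euclidean (convex hull (a ` G))) (powertop_real G)
      (\<lambda>x. restrict (\<lambda>i. norm (x - a i) powr p i) G)"
    by (auto simp: continuous_map_componentwise)
  show "compact_space (subtopology euclidean (convex hull (a ` G)))"
    using assms(1)
    by (simp add: compact_space_subtopology compactin_euclidean_iff finite_imp_compact_convex_hull)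
  show "Hausdorff_space (powertop_real G)"
    by (simp add: Hausdorff_space_product_topology)
  show "inj_on (\<lambda>x. restrict (\<lambda>i. norm (x - a i) powr p i) G)
      (topspace (subtopology euclidean (convex hull (a ` G))))"
  proof (rule inj_onI)
    fix x y assume x: "x \<in> topspace (subtopology euclidean (convex hull (a ` G)))"
      and eq: "restrict (\<lambda>i. norm (x - a i) powr p i) G = restrict (\<lambda>i. norm (y - a i) powr p i) G"
    have "norm (y - a i) powr p i \<le> norm (x - a i) powr p i" if "i \<in> G" for i
      using fun_cong[OF eq, of i] that by simp
    then have "\<forall>i\<in>G. dist y (a i) \<le> dist x (a i)"
      using assms(2) by (simp add: powr_le_powr_iff dist_norm)
    then show "x = y"
      using eq_if_dist_le_on_convex_hull[of x "a ` G" y] x by auto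
  qed
qed

theorem theorem5:
  fixes a :: "nat \<Rightarrow> real ^ 'n" and p :: "nat \<Rightarrow> real" and m :: nat
  assumes "1 \<le> m" and "m \<le> CARD('n) + 1"
    and "inj_on a {1..m}"
    and "\<not> affine_dependent (a ` {1..m})"
    and "\<forall>i\<in>{1..m}. p i > 0"
  shows "simple_problem (\<lambda>i x. norm (x - a i) powr p i) {1..m} UNIV"
  unfolding simple_problem_def
proof (intro allI impI conjI)
  fix G assume G: "G \<subseteq> {1..m}"
  have fin: "finite G" and pos: "\<forall>i\<in>G. 0 < p i"
    using G assms(5) finite_subset by auto
  have card: "card (a ` G) = card G"
    using card_image[OF inj_on_subset[OF assms(3) G]] .
  have ind: "\<not> affine_dependent (a ` G)"
    using affine_independent_subset[OF assms(4) image_mono[OF G]] .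
  note pareto = pareto_set_powr_dist[OF fin pos]
  show "subtopology euclidean (pareto_set (\<lambda>i x. norm (x - a i) powr p i) UNIV G) homeomorphic_space
          subtopology (powertop_real {..<card G}) (std_simplex (card G))"
    using convex_hull_homeomorphic_std_simplex[OF finite_imageI[OF fin] ind]
    unfolding pareto card .
  show "embedding_map (subtopology euclidean (pareto_set (\<lambda>i x. norm (x - a i) powr p i) UNIV G))
          (powertop_real G) (\<lambda>x. restrict (\<lambda>i. norm (x - a i) powr p i) G)"
    unfolding pareto by (rule embedding_map_powr_dist[OF fin pos])
qed

end
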